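(* Let $\{t_k\}_{k\ge1}$ and $\{\xi_k\}_{k\ge1}$ be two sequences in $[1,+\infty)$. Assume that $\{t_k^2\xi_k\}$ is nondecreasing, $t_k^2\xi_k\to+\infty$, and $t_{k+1}^2\xi_{k+1}-t_k^2\xi_k\le\rho t_{k+1}\xi_{k+1}$ for all $k\ge1$, for some $0<\rho\le1$. Then $\sum_{k=1}^{+\infty}\frac1{t_k}=+\infty$. *)

theory Defs
  imports "HOL-Analysis.Analysis"
begin

end

theory Submission
  imports Defs
begin

text \<open>Put \<open>a k = t(k)\<^sup>2 \<xi>(k)\<close>. The step hypothesis with \<open>\<rho> \<le> 1\<close> says that the
  relative increment \<open>(a(k+1) - a k) / a(k+1)\<close> is at most \<open>1 / t(k+1)\<close>. For an increasing
  positive sequence the relative increments over a block \<open>n \<le> k < m\<close> add up to at least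
  \<open>(a m - a n) / a m\<close>, which is \<open>\<ge> 1/2\<close> once \<open>a m \<ge> 2 a n\<close>. Since \<open>a\<close> tends to infinity
  this happens beyond every \<open>n\<close>, so the series of relative increments, and with it
  \<open>\<Sum> 1 / t(k)\<close>, violates the Cauchy criterion.\<close>

lemma sum_increment_ratio_ge:
  fixes a :: "nat \<Rightarrow> real"
  assumes pos: "\<And>k. 0 < a k" and inc: "incseq a" and "n \<le> m"
  shows "(a m - a n) / a m \<le> (\<Sum>k\<in>{n..<m}. (a (Suc k) - a k) / a (Suc k))"
  using \<open>n \<le> m\<close>
proof (induction m rule: dec_induct)
  case base
  then show ?case by simp
next
  case (step m)
  have "a n \<le> a m" "a m \<le> a (Suc m)"
    using inc step.hyps by (auto simp: incseq_def)
  then have "(a m - a n) / a (Suc m) \<le> (a m - a n) / a m"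
    using pos[of m] by (intro divide_left_mono) simp_all
  then have "(a (Suc m) - a n) / a (Suc m)
      \<le> (a m - a n) / a m + (a (Suc m) - a m) / a (Suc m)"
    by (simp add: diff_divide_distrib)
  also have "\<dots> \<le> (\<Sum>k\<in>{n..<Suc m}. (a (Suc k) - a k) / a (Suc k))"
    using step.IH step.hyps by simp
  finally show ?case .
qed

lemma not_summable_increment_ratio:
  fixes a :: "nat \<Rightarrow> real"
  assumes pos: "\<And>k. 0 < a k" and inc: "incseq a"
    and lim: "filterlim a at_top sequentially"
  shows "\<not> summable (\<lambda>k. (a (Suc k) - a k) / a (Suc k))"
proof
  assume "summable (\<lambda>k. (a (Suc k) - a k) / a (Suc k))"
  then obtain n where n: "\<And>m. norm (\<Sum>k\<in>{n..<m}. (a (Suc k) - a k) / a (Suc k)) < 1/2"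
    unfolding summable_Cauchy by (metis order_refl half_gt_zero zero_less_one)
  have "\<forall>\<^sub>F m in sequentially. 2 * a n \<le> a m"
    using lim by (simp add: filterlim_at_top)
  then obtain m where m: "2 * a n \<le> a m" "n \<le> m"
    by (metis eventually_sequentially nle_le)
  have "1/2 \<le> (a m - a n) / a m"
    using m(1) pos[of m] by (simp add: divide_simps)
  also have "\<dots> \<le> (\<Sum>k\<in>{n..<m}. (a (Suc k) - a k) / a (Suc k))"
    using sum_increment_ratio_ge[OF pos inc m(2)] .
  also have "\<dots> < 1/2"
    using n[of m] by simp
  finally show False by simp
qed

lemma not_summable_if_increment_ratio_le:
  fixes a f :: "nat \<Rightarrow> real"
  assumes pos: "\<And>k. 0 < a k" and inc: "incseq a"
    and lim: "filterlim a at_top sequentially"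
    and ratio_le: "\<And>k. (a (Suc k) - a k) / a (Suc k) \<le> f k"
  shows "\<not> summable f"
proof
  assume "summable f"
  moreover have "norm ((a (Suc k) - a k) / a (Suc k)) \<le> f k" for k
    using ratio_le[of k] pos[of "Suc k"] incseq_SucD[OF inc, of k] by simp
  ultimately have "summable (\<lambda>k. (a (Suc k) - a k) / a (Suc k))"
    by (rule summable_comparison_test')
  with not_summable_increment_ratio[OF pos inc lim] show False ..
qed

theorem lemmaA6:
  fixes t xi :: "nat \<Rightarrow> real" and \<rho> :: real
  assumes t_ge: "\<And>k. k \<ge> 1 \<Longrightarrow> t k \<ge> 1"
    and xi_ge: "\<And>k. k \<ge> 1 \<Longrightarrow> xi k \<ge> 1"
    and mono: "\<And>k. k \<ge> 1 \<Longrightarrow> (t k)\<^sup>2 * xi k \<le> (t (Suc k))\<^sup>2 * xi (Suc k)"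
    and lim: "filterlim (\<lambda>k. (t k)\<^sup>2 * xi k) at_top sequentially"
    and rho: "0 < \<rho>" "\<rho> \<le> 1"
    and step: "\<And>k. k \<ge> 1 \<Longrightarrow>
       (t (Suc k))\<^sup>2 * xi (Suc k) - (t k)\<^sup>2 * xi k \<le> \<rho> * t (Suc k) * xi (Suc k)"
  shows "\<not> summable (\<lambda>k. 1 / t (Suc k))"
proof -
  \<comment> \<open>Shifted by one so that the hypotheses, stated for \<open>k \<ge> 1\<close>, hold for all \<open>k\<close>.\<close>
  define a where "a = (\<lambda>k. (t (Suc k))\<^sup>2 * xi (Suc k))"
  have t1: "t (Suc k) \<ge> 1" and xi1: "xi (Suc k) \<ge> 1" for k
    using t_ge xi_ge by simp_all
  have pos: "0 < a k" for k
    using t1[of k] xi1[of k] by (simp add: a_def)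
  have "incseq a"
    using mono by (intro incseq_SucI) (simp add: a_def)
  moreover have "filterlim a at_top sequentially"
    using lim filterlim_sequentially_Suc[of "\<lambda>k. (t k)\<^sup>2 * xi k"]
    by (simp add: a_def)
  moreover have "(a (Suc k) - a k) / a (Suc k) \<le> 1 / t (Suc (Suc k))" for k
  proof -
    have "a (Suc k) - a k \<le> \<rho> * t (Suc (Suc k)) * xi (Suc (Suc k))"
      using step[of "Suc k"] by (simp add: a_def)
    also have "\<dots> \<le> a (Suc k) / t (Suc (Suc k))"
      using rho t1[of "Suc k"] xi1[of "Suc k"] by (simp add: a_def power2_eq_square)
    finally show ?thesis
      using pos[of "Suc k"] t1[of "Suc k"] by (simp add: divide_simps mult.commute)
  qed
  ultimately have "\<not> summable (\<lambda>k. 1 / t (Suc (Suc k)))"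
    by (rule not_summable_if_increment_ratio_le[OF pos])
  then show ?thesis
    using summable_Suc_iff[of "\<lambda>k. 1 / t (Suc k)"] by simp
qed

end
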